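(* Assume all jobs have the same processing time, i.e. $p_j=1$ for all $j\in[n]$. Run IPR with $\rho=2$, and for each iteration $i$ of the while loop let $b^{(i)}_{\min}$ be the minimum of $p(B)$ over all bags in the tentative assignment at the start of iteration $i$. Then at each iteration $i$ (such that iteration $i+1$ is executed), $b^{(i+1)}_{\min}\ge b^{(i)}_{\min}$.
   Context: Jobs $j\in[n]$ have processing times $p_j\ge0$; for a bag $B$, $p(B)=\sum_{j\in B}p_j$. There are $m$ machines with predicted speeds $\hat s_1\ge\dots\ge\hat s_m$; $opt(\mathbf p,\hat{\mathbf s})$ is the minimum makespan $\max_i(\text{load of } i)/\hat s_i$ of assigning jobs to machines with speeds $\hat{\mathbf s}$. Algorithm IPR. Input: $\hat{\mathbf s}$, $\mathbf p$, $\alpha\in(0,1)$, accuracy $\epsilon\in(0,1)$, $\rho\ge1$. (1) Compute a partition $B_1,\dots,B_m$ with $p(B_1)\ge\dots\ge p(B_m)$ such that putting $B_i$ on machine $i$ has makespan at most $(1+\epsilon)opt(\mathbf p,\hat{\mathbf s})$ under speeds $\hat{\mathbf s}$. (2) Set $\overline{OPT}_C=\max_i p(B_i)/\hat s_i$ and tentative assignment $\mathcal M_i=\{B_i\}$. (3) While $\max\{p(B): B\in\cup_i\mathcal M_i, |B|\ge2\}>\rho\min\{p(B):B\in\cup_i\mathcal M_i\}$ (each execution of the loop body is an iteration): compute $\mathcal M'=$ LPT-Rebalance$(\mathcal M)$; if $\max_i\sum_{B\in\mathcal M'_i}p(B)/\hat s_i>(1+\alpha)\overline{OPT}_C$ return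 the current bags $\cup_i\mathcal M_i$; else $\mathcal M\leftarrow\mathcal M'$. (4) Return the bags $\cup_i\mathcal M_i$. LPT-Rebalance: let $B_{\min}$ be a bag of minimum $p(B)$ over all bags, $\mathcal M_{\min}$ its collection, $\mathcal M_{\max}$ a collection containing a bag of maximum $p(B)$ among bags with at least two jobs. Move $B_{\min}$ into $\mathcal M_{\max}$, let $\ell=|\mathcal M_{\max}|$, pool its jobs and redistribute them into $\ell$ new bags by LPT (jobs in non-increasing processing time, each into a currently least-loaded bag); these form the new $\mathcal M_{\max}$. *)

theory Defs
  imports Complex_Main "HOL-Library.Multiset" "HOL-Library.FuncSet"
begin

text \<open>Jobs are the naturals 0..<n, machines are 0..<m (machine i has predicted speed s i).
  A bag is a set of jobs; a tentative assignment maps each machine to a multiset of bags.\<close>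

definition pB :: "(nat \<Rightarrow> real) \<Rightarrow> nat set \<Rightarrow> real" where
  "pB p B = (\<Sum>j\<in>B. p j)"

definition opt :: "(nat \<Rightarrow> real) \<Rightarrow> (nat \<Rightarrow> real) \<Rightarrow> nat \<Rightarrow> nat \<Rightarrow> real" where
  "opt p s n m = Min {Max {(\<Sum>j\<in>{j. j < n \<and> f j = i}. p j) / s i | i. i < m} | f.
                       f \<in> {0..<n} \<rightarrow>\<^sub>E {0..<m}}"

definition bags :: "(nat \<Rightarrow> nat set multiset) \<Rightarrow> nat \<Rightarrow> nat set multiset" where
  "bags M m = (\<Sum>i<m. M i)"

definition min_bag :: "(nat \<Rightarrow> real) \<Rightarrow> (nat \<Rightarrow> nat set multiset) \<Rightarrow> nat \<Rightarrow> real" where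
  "min_bag p M m = Min (pB p ` set_mset (bags M m))"

definition max_multi_bag :: "(nat \<Rightarrow> real) \<Rightarrow> (nat \<Rightarrow> nat set multiset) \<Rightarrow> nat \<Rightarrow> real" where
  "max_multi_bag p M m = Max (pB p ` {B \<in> set_mset (bags M m). card B \<ge> 2})"

definition loop_cond :: "(nat \<Rightarrow> real) \<Rightarrow> real \<Rightarrow> (nat \<Rightarrow> nat set multiset) \<Rightarrow> nat \<Rightarrow> bool" where
  "loop_cond p \<rho> M m \<longleftrightarrow>
     (\<exists>B\<in>#bags M m. card B \<ge> 2) \<and> max_multi_bag p M m > \<rho> * min_bag p M m"

definition makespan :: "(nat \<Rightarrow> real) \<Rightarrow> (nat \<Rightarrow> real) \<Rightarrow> (nat \<Rightarrow> nat set multiset) \<Rightarrow> nat \<Rightarrow> real" where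
  "makespan p s M m = Max {(\<Sum>B\<in>#M i. pB p B) / s i | i. i < m}"

text \<open>LPT run: jobs processed in the given order, each put into a currently least-loaded bag
  (ties broken arbitrarily, hence a relation).\<close>
inductive lpt_run :: "(nat \<Rightarrow> real) \<Rightarrow> nat list \<Rightarrow> nat set list \<Rightarrow> nat set list \<Rightarrow> bool"
  for p where
  lpt_nil: "lpt_run p [] Bs Bs"
| lpt_cons: "\<lbrakk>k < length Bs; \<forall>k'<length Bs. pB p (Bs ! k) \<le> pB p (Bs ! k');
             lpt_run p js (Bs[k := insert j (Bs ! k)]) Bs'\<rbrakk> \<Longrightarrow> lpt_run p (j # js) Bs Bs'"

definition LPT :: "(nat \<Rightarrow> real) \<Rightarrow> nat set \<Rightarrow> nat \<Rightarrow> nat set multiset \<Rightarrow> bool" where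
  "LPT p J l N \<longleftrightarrow> (\<exists>js Bs. distinct js \<and> set js = J \<and> sorted_wrt (\<lambda>a b. p a \<ge> p b) js
       \<and> lpt_run p js (replicate l {}) Bs \<and> N = mset Bs)"

text \<open>LPT-Rebalance (as a relation: choices of B_min, M_max and LPT ties are arbitrary).\<close>
definition lpt_rebalance :: "(nat \<Rightarrow> real) \<Rightarrow> nat \<Rightarrow> (nat \<Rightarrow> nat set multiset)
    \<Rightarrow> (nat \<Rightarrow> nat set multiset) \<Rightarrow> bool" where
  "lpt_rebalance p m M M' \<longleftrightarrow> (\<exists>i0 i1 Bmin Bmax N.
     i0 < m \<and> i1 < m \<and> Bmin \<in># M i0 \<and> pB p Bmin = min_bag p M m \<and>
     Bmax \<in># M i1 \<and> card Bmax \<ge> 2 \<and> pB p Bmax = max_multi_bag p M m \<and>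
     (let M1 = M(i0 := M i0 - {#Bmin#});
          M2 = M1(i1 := M1 i1 + {#Bmin#})
      in LPT p (\<Union>(set_mset (M2 i1))) (size (M2 i1)) N \<and> M' = M2(i1 := N)))"

definition initial_partition :: "(nat \<Rightarrow> real) \<Rightarrow> (nat \<Rightarrow> real) \<Rightarrow> nat \<Rightarrow> nat \<Rightarrow> real
    \<Rightarrow> (nat \<Rightarrow> nat set) \<Rightarrow> bool" where
  "initial_partition p s n m \<epsilon> B \<longleftrightarrow>
     (\<forall>i<m. \<forall>i'<m. i \<noteq> i' \<longrightarrow> B i \<inter> B i' = {}) \<and> (\<Union>i<m. B i) = {0..<n} \<and>
     (\<forall>i<m. \<forall>i'<m. i \<le> i' \<longrightarrow> pB p (B i) \<ge> pB p (B i')) \<and>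
     (\<forall>i<m. pB p (B i) / s i \<le> (1 + \<epsilon>) * opt p s n m)"

definition init_assign :: "nat \<Rightarrow> (nat \<Rightarrow> nat set) \<Rightarrow> nat \<Rightarrow> nat set multiset" where
  "init_assign m B = (\<lambda>i. if i < m then {#B i#} else {#})"

definition OPTC :: "(nat \<Rightarrow> real) \<Rightarrow> (nat \<Rightarrow> real) \<Rightarrow> nat \<Rightarrow> (nat \<Rightarrow> nat set) \<Rightarrow> real" where
  "OPTC p s m B = Max {pB p (B i) / s i | i. i < m}"

text \<open>Ms is a run of the while loop of IPR in which the first k iterations were executed and
  accepted (Ms t is the tentative assignment at the start of iteration t, 0-indexed).\<close>
definition ipr_run :: "(nat \<Rightarrow> real) \<Rightarrow> (nat \<Rightarrow> real) \<Rightarrow> nat \<Rightarrow> nat \<Rightarrow> real \<Rightarrow> real \<Rightarrow> real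
    \<Rightarrow> (nat \<Rightarrow> nat set) \<Rightarrow> (nat \<Rightarrow> nat \<Rightarrow> nat set multiset) \<Rightarrow> nat \<Rightarrow> bool" where
  "ipr_run p s n m \<alpha> \<epsilon> \<rho> B Ms k \<longleftrightarrow>
     initial_partition p s n m \<epsilon> B \<and> Ms 0 = init_assign m B \<and>
     (\<forall>t<k. loop_cond p \<rho> (Ms t) m \<and> lpt_rebalance p m (Ms t) (Ms (Suc t)) \<and>
            makespan p s (Ms (Suc t)) m \<le> (1 + \<alpha>) * OPTC p s m B)"

end

theory Submission
  imports Defs
begin

text \<open>With unit processing times LPT puts each job into a bag of minimum cardinality, so the
  bags it produces differ in size by at most one. A rebalancing step pools \<open>\<ell>\<close> bags, each
  at least as large as the smallest bag \<open>c = |B_min|\<close> (which is one of them); as long as the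
  bags are pairwise disjoint these contain at least \<open>\<ell> c\<close> distinct jobs, so all \<open>\<ell>\<close> new
  bags have size at least \<open>c\<close>, and the untouched bags are unchanged. Disjointness is an
  invariant of every run of the loop.\<close>

definition balanced :: "nat list \<Rightarrow> bool" where
  "balanced xs \<longleftrightarrow> (\<forall>x\<in>set xs. \<forall>y\<in>set xs. x \<le> Suc y)"

lemma balanced_incr_min:
  assumes "balanced xs" "k < length xs" "\<forall>y\<in>set xs. xs ! k \<le> y"
  shows "balanced (xs[k := Suc (xs ! k)])"
  unfolding balanced_def
proof (intro ballI)
  let ?a = "xs ! k"
  fix x y assume "x \<in> set (xs[k := Suc ?a])" "y \<in> set (xs[k := Suc ?a])"
  then have x: "x = Suc ?a \<or> x \<in> set xs" and y: "y = Suc ?a \<or> y \<in> set xs"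
    using set_update_subset_insert[of xs k "Suc ?a"] by blast+
  have a: "?a \<in> set xs" using assms(2) by simp
  have "?a \<le> y" using y assms(3) by auto
  moreover have "x \<le> Suc ?a" using x a assms(1) unfolding balanced_def by blast
  ultimately show "x \<le> Suc y" by simp
qed

lemma sum_list_le_const:
  fixes xs :: "nat list"
  assumes "\<forall>y\<in>set xs. y \<le> c"
  shows "sum_list xs \<le> length xs * c"
  using sum_list_mono[of xs id "\<lambda>_. c"] assms by (simp add: sum_list_triv)

lemma balanced_ge_average:
  assumes "balanced xs" "length xs * c \<le> sum_list xs" "x \<in> set xs"
  shows "c \<le> x"
proof (rule ccontr)
  assume "\<not> c \<le> x"
  have small: "\<forall>y\<in>set xs. y \<le> c"
  proof
    fix y assume "y \<in> set xs"
    then have "y \<le> Suc x" using assms(1,3) unfolding balanced_def by blast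
    then show "y \<le> c" using \<open>\<not> c \<le> x\<close> by simp
  qed
  obtain ys zs where xs: "xs = ys @ x # zs" using split_list[OF assms(3)] by blast
  have "sum_list ys \<le> length ys * c" "sum_list zs \<le> length zs * c"
    using small xs by (auto intro: sum_list_le_const)
  then have "sum_list xs < length xs * c" using \<open>\<not> c \<le> x\<close> xs by (simp add: algebra_simps)
  then show False using assms(2) by simp
qed

lemma Union_set_update_insert:
  "k < length Bs \<Longrightarrow> \<Union>(set (Bs[k := insert j (Bs ! k)])) = insert j (\<Union>(set Bs))"
  by (induction Bs arbitrary: k) (auto split: nat.splits)

lemma lpt_run_length: "lpt_run p js Bs Bs' \<Longrightarrow> length Bs' = length Bs"
  by (induction rule: lpt_run.induct) simp_all

lemma lpt_run_Union: "lpt_run p js Bs Bs' \<Longrightarrow> \<Union>(set Bs') = \<Union>(set Bs) \<union> set js"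
  by (induction rule: lpt_run.induct) (simp_all add: Union_set_update_insert)

definition fresh_bags :: "nat set list \<Rightarrow> nat list \<Rightarrow> bool" where
  "fresh_bags Bs js \<longleftrightarrow> (\<forall>B\<in>set Bs. finite B \<and> B \<inter> set js = {})"

lemma fresh_bags_insert:
  assumes "fresh_bags Bs (j # js)" "distinct (j # js)" "k < length Bs"
  shows "fresh_bags (Bs[k := insert j (Bs ! k)]) js"
  unfolding fresh_bags_def
proof
  fix B assume "B \<in> set (Bs[k := insert j (Bs ! k)])"
  then have "B = insert j (Bs ! k) \<or> B \<in> set Bs"
    using set_update_subset_insert[of Bs k "insert j (Bs ! k)"] by blast
  moreover have "Bs ! k \<in> set Bs" using assms(3) by simp
  ultimately show "finite B \<and> B \<inter> set js = {}" using assms(1,2) unfolding fresh_bags_def by auto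
qed

lemma fresh_bags_card_insert:
  assumes "fresh_bags Bs (j # js)" "k < length Bs"
  shows "map card (Bs[k := insert j (Bs ! k)]) = (map card Bs)[k := Suc (card (Bs ! k))]"
proof -
  have "Bs ! k \<in> set Bs" using assms(2) by simp
  then have "finite (Bs ! k)" "j \<notin> Bs ! k" using assms(1) unfolding fresh_bags_def by auto
  then show ?thesis by (simp add: map_update)
qed

lemma lpt_run_sum_card:
  "lpt_run p js Bs Bs' \<Longrightarrow> distinct js \<Longrightarrow> fresh_bags Bs js
   \<Longrightarrow> sum_list (map card Bs') = sum_list (map card Bs) + length js"
proof (induction rule: lpt_run.induct)
  case (lpt_cons k Bs js j Bs')
  then show ?case
    by (simp add: fresh_bags_insert fresh_bags_card_insert sum_list_update)
qed simp

lemma pB_eq_card: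
  assumes "\<forall>j\<in>B. p j = 1"
  shows "pB p B = real (card B)"
proof -
  have "pB p B = (\<Sum>j\<in>B. 1)" unfolding pB_def using assms by (intro sum.cong) simp_all
  then show ?thesis by simp
qed

lemma lpt_run_balanced:
  "lpt_run p js Bs Bs' \<Longrightarrow> distinct js \<Longrightarrow> fresh_bags Bs js
   \<Longrightarrow> \<forall>j\<in>\<Union>(set Bs) \<union> set js. p j = 1 \<Longrightarrow> balanced (map card Bs) \<Longrightarrow> balanced (map card Bs')"
proof (induction rule: lpt_run.induct)
  case (lpt_cons k Bs js j Bs')
  have "card (Bs ! k) \<le> card (Bs ! k')" if "k' < length Bs" for k'
  proof -
    have "Bs ! k \<in> set Bs" "Bs ! k' \<in> set Bs" using lpt_cons.hyps(1) that by simp_all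
    then have "pB p (Bs ! k) = card (Bs ! k)" "pB p (Bs ! k') = card (Bs ! k')"
      using lpt_cons.prems(3) by (auto intro!: pB_eq_card)
    then show ?thesis using lpt_cons.hyps(2) that by fastforce
  qed
  then have "\<forall>y\<in>set (map card Bs). map card Bs ! k \<le> y"
    using lpt_cons.hyps(1) by (auto simp: in_set_conv_nth)
  then have "balanced (map card (Bs[k := insert j (Bs ! k)]))"
    using balanced_incr_min[of "map card Bs" k] lpt_cons.hyps(1) lpt_cons.prems(2,4)
    by (simp add: fresh_bags_card_insert)
  then show ?case
    using lpt_cons by (simp add: fresh_bags_insert Union_set_update_insert)
qed simp

lemma LPT_bags:
  assumes "LPT p J l N"
  shows "size N = l" "\<Union>(set_mset N) = J" "(\<Sum>B\<in>#N. card B) = card J"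
proof -
  obtain js Bs where js: "distinct js" "set js = J" and run: "lpt_run p js (replicate l {}) Bs"
    and N: "N = mset Bs"
    using assms unfolding LPT_def by blast
  have fresh: "fresh_bags (replicate l {}) js" by (simp add: fresh_bags_def)
  show "size N = l" using lpt_run_length[OF run] N by simp
  show "\<Union>(set_mset N) = J" using lpt_run_Union[OF run] js N by (simp add: set_replicate_conv_if)
  have "(\<Sum>B\<in>#N. card B) = sum_list (map card Bs)" unfolding N by (metis mset_map sum_mset_sum_list)
  also have "\<dots> = card J"
    using lpt_run_sum_card[OF run js(1) fresh] js by (auto simp: distinct_card sum_list_replicate)
  finally show "(\<Sum>B\<in>#N. card B) = card J" .
qed

lemma LPT_unit_card_ge:
  assumes "LPT p J l N" "\<forall>j\<in>J. p j = 1" "l * c \<le> card J" "B \<in># N"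
  shows "c \<le> card B"
proof -
  obtain js Bs where js: "distinct js" "set js = J" and run: "lpt_run p js (replicate l {}) Bs"
    and N: "N = mset Bs"
    using assms(1) unfolding LPT_def by blast
  have "fresh_bags (replicate l {}) js" by (simp add: fresh_bags_def)
  moreover have "balanced (map card (replicate l {}))" by (simp add: balanced_def)
  ultimately have "balanced (map card Bs)"
    using lpt_run_balanced[OF run js(1)] assms(2) js(2) by simp
  moreover have "length (map card Bs) * c \<le> sum_list (map card Bs)"
    using lpt_run_length[OF run] lpt_run_sum_card[OF run js(1)] \<open>fresh_bags _ js\<close> assms(3) js
    by (auto simp: distinct_card sum_list_replicate)
  ultimately show ?thesis using balanced_ge_average assms(4) N by simp
qed

lemma card_Union_mset_le: "card (\<Union>(set_mset A)) \<le> (\<Sum>B\<in>#A. card B)"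
proof (induction A)
  case (add B A)
  have "card (\<Union>(set_mset (add_mset B A))) \<le> card B + card (\<Union>(set_mset A))"
    using card_Un_le[of B "\<Union>(set_mset A)"] by simp
  then show ?case using add by simp
qed simp

lemma card_Union_mset_eq_summand:
  assumes "card (\<Union>(set_mset (Y + R))) = (\<Sum>B\<in>#Y + R. card B)"
  shows "card (\<Union>(set_mset Y)) = (\<Sum>B\<in>#Y. card B)"
proof -
  have "card (\<Union>(set_mset (Y + R))) \<le> card (\<Union>(set_mset Y)) + card (\<Union>(set_mset R))"
    using card_Un_le[of "\<Union>(set_mset Y)" "\<Union>(set_mset R)"] by simp
  then show ?thesis using assms card_Union_mset_le[of Y] card_Union_mset_le[of R] by simp
qed

text \<open>The cardinality identity says that the bags are pairwise disjoint (only empty bags may repeat).\<close>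
definition disjoint_job_bags :: "nat \<Rightarrow> nat set multiset \<Rightarrow> bool" where
  "disjoint_job_bags n X \<longleftrightarrow>
     (\<forall>B\<in>#X. B \<subseteq> {0..<n}) \<and> card (\<Union>(set_mset X)) = (\<Sum>B\<in>#X. card B)"

lemma disjoint_job_bags_summand:
  "disjoint_job_bags n (Y + R) \<Longrightarrow> card (\<Union>(set_mset Y)) = (\<Sum>B\<in>#Y. card B)"
  unfolding disjoint_job_bags_def by (blast intro: card_Union_mset_eq_summand)

lemma disjoint_job_bags_replace:
  assumes "disjoint_job_bags n (Y + R)"
    and "\<Union>(set_mset N) = \<Union>(set_mset Y)" "(\<Sum>B\<in>#N. card B) = card (\<Union>(set_mset Y))"
  shows "disjoint_job_bags n (N + R)"
proof -
  have "card (\<Union>(set_mset (N + R))) = card (\<Union>(set_mset (Y + R)))"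
    using assms(2) by simp
  also have "\<dots> = (\<Sum>B\<in>#Y. card B) + (\<Sum>B\<in>#R. card B)"
    using assms(1) unfolding disjoint_job_bags_def by simp
  also have "\<dots> = (\<Sum>B\<in>#N + R. card B)"
    using assms(3) disjoint_job_bags_summand[OF assms(1)] by simp
  finally show ?thesis using assms(1,2) unfolding disjoint_job_bags_def by auto
qed

lemma bags_fun_upd: "i < m \<Longrightarrow> bags (f(i := v)) m + f i = bags f m + v"
  unfolding bags_def by (simp add: sum.remove add_ac)

lemma subset_mset_bags:
  assumes "i < m"
  shows "f i \<subseteq># bags f m"
proof -
  have "bags (f(i := {#})) m + f i = bags f m" using bags_fun_upd[OF assms] by simp
  then show ?thesis by (metis mset_subset_eq_add_right)
qed

lemma lpt_rebalance_decomp: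
  assumes "lpt_rebalance p m M M'"
  obtains Y R N Bmin where "bags M m = Y + R" "bags M' m = N + R"
    "Bmin \<in># Y" "pB p Bmin = min_bag p M m" "LPT p (\<Union>(set_mset Y)) (size Y) N"
proof -
  obtain i0 i1 Bmin N where i: "i0 < m" "i1 < m" and Bmin: "Bmin \<in># M i0" "pB p Bmin = min_bag p M m"
    and step: "let M1 = M(i0 := M i0 - {#Bmin#}); M2 = M1(i1 := M1 i1 + {#Bmin#})
               in LPT p (\<Union>(set_mset (M2 i1))) (size (M2 i1)) N \<and> M' = M2(i1 := N)"
    using assms unfolding lpt_rebalance_def by blast
  define M1 where "M1 = M(i0 := M i0 - {#Bmin#})"
  define M2 where "M2 = M1(i1 := M1 i1 + {#Bmin#})"
  have LPT: "LPT p (\<Union>(set_mset (M2 i1))) (size (M2 i1)) N" and M': "M' = M2(i1 := N)"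
    using step unfolding Let_def M1_def M2_def by auto
  define D where "D = M i0 - {#Bmin#}"
  have "M i0 = D + {#Bmin#}" unfolding D_def using Bmin(1) by simp
  moreover have "bags M1 m + M i0 = bags M m + D"
    unfolding M1_def D_def using bags_fun_upd[OF i(1)] .
  ultimately have "bags M1 m + {#Bmin#} = bags M m" by (simp add: add_ac)
  moreover have "bags M2 m + M1 i1 = bags M1 m + (M1 i1 + {#Bmin#})"
    unfolding M2_def using bags_fun_upd[OF i(2)] .
  ultimately have M2: "bags M2 m = bags M m" by (simp add: add_ac)
  have M'_Y: "bags M' m + M2 i1 = bags M m + N"
    unfolding M' using bags_fun_upd[OF i(2)] M2 by simp
  define R where "R = bags M m - M2 i1"
  have "bags M m = M2 i1 + R"
    unfolding R_def using subset_mset_bags[OF i(2), of M2] M2 by simp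
  moreover from this have "bags M' m = N + R" using M'_Y by (simp add: add_ac)
  moreover have "Bmin \<in># M2 i1" unfolding M2_def by simp
  ultimately show ?thesis using that Bmin(2) LPT by blast
qed

lemma min_bag_le: "B \<in># bags M m \<Longrightarrow> min_bag p M m \<le> pB p B"
  unfolding min_bag_def by simp

lemma min_bag_ge: "bags M m \<noteq> {#} \<Longrightarrow> \<forall>B\<in>#bags M m. c \<le> pB p B \<Longrightarrow> c \<le> min_bag p M m"
  unfolding min_bag_def by simp

lemma lpt_rebalance_disjoint_job_bags:
  assumes "disjoint_job_bags n (bags M m)" "lpt_rebalance p m M M'"
  shows "disjoint_job_bags n (bags M' m)"
proof -
  obtain Y R N where "bags M m = Y + R" "bags M' m = N + R" "LPT p (\<Union>(set_mset Y)) (size Y) N"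
    using lpt_rebalance_decomp[OF assms(2)] by metis
  then show ?thesis using assms(1) LPT_bags disjoint_job_bags_replace by metis
qed

lemma LPT_pooled_unit_card_ge:
  assumes disj: "disjoint_job_bags n (Y + R)" and unit: "\<forall>j<n. p j = 1"
    and ge: "\<forall>B\<in>#Y. c \<le> card B" and LPT: "LPT p (\<Union>(set_mset Y)) (size Y) N" and "B \<in># N"
  shows "c \<le> card B"
proof -
  have "size Y * c \<le> (\<Sum>B\<in>#Y. card B)"
    using sum_mset_mono[of Y "\<lambda>_. c" card] ge by simp
  also have "\<dots> = card (\<Union>(set_mset Y))"
    using disjoint_job_bags_summand[OF disj] by simp
  finally have size_le: "size Y * c \<le> card (\<Union>(set_mset Y))" .
  have "\<forall>j\<in>\<Union>(set_mset Y). p j = 1"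
  proof
    fix j assume "j \<in> \<Union>(set_mset Y)"
    then obtain B where B: "B \<in># Y" "j \<in> B" by blast
    then have "B \<subseteq> {0..<n}" using disj unfolding disjoint_job_bags_def by simp
    then show "p j = 1" using unit B(2) by auto
  qed
  then show ?thesis using LPT_unit_card_ge[OF LPT _ size_le \<open>B \<in># N\<close>] by simp
qed

lemma lpt_rebalance_unit_min_bag_mono:
  assumes unit: "\<forall>j<n. p j = 1" and disj: "disjoint_job_bags n (bags M m)"
    and reb: "lpt_rebalance p m M M'"
  shows "min_bag p M m \<le> min_bag p M' m"
proof -
  obtain Y R N Bmin where X: "bags M m = Y + R" and X': "bags M' m = N + R" and "Bmin \<in># Y"
    and Bmin: "pB p Bmin = min_bag p M m" and LPT: "LPT p (\<Union>(set_mset Y)) (size Y) N"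
    using lpt_rebalance_decomp[OF reb] by metis
  have pB_card: "pB p B = card B" if "B \<subseteq> {0..<n}" for B
    using that unit by (auto intro!: pB_eq_card)
  have jobs: "B \<subseteq> {0..<n}" if "B \<in># bags M m" for B
    using disj that unfolding disjoint_job_bags_def by blast
  define c where "c = card Bmin"
  have min_c: "min_bag p M m = c"
    using Bmin pB_card jobs X \<open>Bmin \<in># Y\<close> unfolding c_def by simp
  have old_ge: "c \<le> card B" if "B \<in># bags M m" for B
    using min_bag_le[OF that, of p] min_c pB_card[OF jobs[OF that]] by simp
  have new_ge: "c \<le> card B" if "B \<in># N" for B
    using LPT_pooled_unit_card_ge[OF _ unit _ LPT that] disj old_ge X by simp
  have new_jobs: "B \<subseteq> {0..<n}" if "B \<in># N" for B
    using that LPT_bags(2)[OF LPT] jobs X by auto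
  have "real c \<le> pB p B" if "B \<in># bags M' m" for B
  proof (cases "B \<in># N")
    case True
    then show ?thesis using new_ge new_jobs pB_card by simp
  next
    case False
    then have "B \<in># bags M m" using that X X' by simp
    then show ?thesis using old_ge jobs pB_card by simp
  qed
  moreover have "bags M' m \<noteq> {#}" using LPT_bags(1)[OF LPT] \<open>Bmin \<in># Y\<close> X' by auto
  ultimately show ?thesis using min_c min_bag_ge by metis
qed

lemma set_mset_sum_singletons: "set_mset (\<Sum>i<(m::nat). {#f i#}) = f ` {..<m}"
  by (induction m) (auto simp: lessThan_Suc)

lemma sum_mset_sum_singletons: "(\<Sum>x\<in>#(\<Sum>i<(m::nat). {#f i#}). g x) = (\<Sum>i<m. g (f i))"
  by (induction m) (auto simp: add.commute)

lemma initial_partition_disjoint_job_bags: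
  assumes "initial_partition p s n m \<epsilon> B"
  shows "disjoint_job_bags n (bags (init_assign m B) m)"
proof -
  have disj: "\<forall>i<m. \<forall>i'<m. i \<noteq> i' \<longrightarrow> B i \<inter> B i' = {}" and cover: "(\<Union>i<m. B i) = {0..<n}"
    using assms unfolding initial_partition_def by auto
  have bags: "bags (init_assign m B) m = (\<Sum>i<m. {#B i#})"
    unfolding bags_def init_assign_def by (rule sum.cong) auto
  have jobs: "B i \<subseteq> {0..<n}" if "i < m" for i using cover that by blast
  then have "finite (B i)" if "i < m" for i using that finite_subset by blast
  then have "card (\<Union>i<m. B i) = (\<Sum>i<m. card (B i))"
    using disj by (intro card_UN_disjoint) auto
  then show ?thesis
    unfolding disjoint_job_bags_def bags set_mset_sum_singletons sum_mset_sum_singletons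
    using jobs by auto
qed

lemma ipr_run_disjoint_job_bags:
  assumes "ipr_run p s n m \<alpha> \<epsilon> \<rho> B Ms k" "t \<le> k"
  shows "disjoint_job_bags n (bags (Ms t) m)"
  using assms(2)
proof (induction t)
  case 0
  then show ?case
    using assms(1) initial_partition_disjoint_job_bags unfolding ipr_run_def by metis
next
  case (Suc t)
  then show ?case
    using assms(1) lpt_rebalance_disjoint_job_bags unfolding ipr_run_def by (metis Suc_le_lessD less_imp_le)
qed

theorem lemma10:
  fixes n m :: nat and p s :: "nat \<Rightarrow> real" and \<alpha> \<epsilon> :: real
    and B :: "nat \<Rightarrow> nat set" and Ms :: "nat \<Rightarrow> nat \<Rightarrow> nat set multiset" and k :: nat
  assumes "m \<ge> 1"
    and "\<forall>i<m. s i > 0"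
    and "\<forall>i<m. \<forall>i'<m. i \<le> i' \<longrightarrow> s i \<ge> s i'"
    and "0 < \<alpha>" "\<alpha> < 1" "0 < \<epsilon>" "\<epsilon> < 1"
    and "\<forall>j<n. p j = 1"
    and "ipr_run p s n m \<alpha> \<epsilon> 2 B Ms (Suc k)"
    and "loop_cond p 2 (Ms (Suc k)) m"
  shows "min_bag p (Ms (Suc k)) m \<ge> min_bag p (Ms k) m"
proof -
  have "disjoint_job_bags n (bags (Ms k) m)"
    using ipr_run_disjoint_job_bags[OF assms(9)] by simp
  moreover have "lpt_rebalance p m (Ms k) (Ms (Suc k))"
    using assms(9) unfolding ipr_run_def by simp
  ultimately show ?thesis using lpt_rebalance_unit_min_bag_mono assms(8) by blast
qed

end
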